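(* Let $\mathcal A_r^\Pi=\{\mathcal O\in\mathcal A_r:[\mathcal O,\Pi_{GI}]=0\}$ and $\hat{\mathcal A}_r^\Pi=\{\hat{\mathcal O}\in\hat{\mathcal A}_r:[\hat{\mathcal O},\Pi_{GI}]=0\}$. Then $$\mathcal A_r^\Pi\,\Pi_{GI}=\hat{\mathcal A}_r^\Pi\,\Pi_{GI},$$ where $\mathcal X\Pi_{GI}$ denotes $\{X\Pi_{GI}:X\in\mathcal X\}$.
   Context: Setup. Let $G$ be a compact Lie group (possibly finite) with normalized Haar measure $dg$ ($\int dg=1$). Let $\Lambda=(V,E)$ be a finite directed graph; loops and multiple edges are allowed. Each edge $e$ carries $\mathcal H_e=L^2(G)$ with unitaries $L_e(g)|h\rangle_e=|gh\rangle_e$ and $R_e(g^{-1})|h\rangle_e=|hg^{-1}\rangle_e$. Each vertex $v$ carries a Hilbert space $\mathcal H_v$ with a unitary representation $U_v$ of $G$. All these spaces are taken finite-dimensional by truncating to finitely many irreducible isotypic sectors, which are invariant under the group actions. The pre-gauged space is $\mathcal H=\bigotimes_v\mathcal H_v\otimes\bigotimes_e\mathcal H_e$, with $\mathcal A=\mathcal B(\mathcal H)$. The gauge transformation at $v$ is $A_v(g)=U_v(g)\prod_{e\in E^-(v)}L_e(g)\prod_{e\in E^+(v)}R_e(g^{-1})$, where $E^-(v)$ is the set of edges oriented out of $v$ and $E^+(v)$ the set of edges oriented into $v$. Set $\Pi_v=\int dg\,A_v(g)$; these are mutually commuting orthogonal projections. Set $\Pi_{GI}=\prod_v\Pi_v$.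 Subregions. A subregion $r$ is an arbitrary subset of $V\cup E$, and $\bar r$ is its complement. Let $\mathcal H_r=\bigotimes_{x\in r}\mathcal H_x$ and $\mathcal A_r=\mathcal B(\mathcal H_r)\otimes 1_{\bar r}$. Let $V_r$ be the set of vertices $v$ such that $v$ and all edges incident to $v$ lie in $r$, and put $\Pi_{V_r}=\prod_{v\in V_r}\Pi_v$; this is an operator in $\mathcal A_r$. The partially gauged algebra is $\hat{\mathcal A}_r=\{\Pi_{V_r}\mathcal O\Pi_{V_r}:\mathcal O\in\mathcal A_r\}$, i.e. the operators on $\hat{\mathcal H}_r=\Pi_{V_r}\mathcal H_r$ tensored with $1_{\bar r}$. *)

theory Defs
  imports "HOL-Probability.Probability" "HOL-Algebra.Group"
begin

text \<open>A local operator on a site of dimension n is a function nat => nat => complex,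
  only its entries with indices below n matter.\<close>

definition kd :: "nat \<Rightarrow> nat \<Rightarrow> complex" where
  "kd i j = (if i = j then 1 else 0)"

definition matmul :: "nat \<Rightarrow> (nat \<Rightarrow> nat \<Rightarrow> complex) \<Rightarrow> (nat \<Rightarrow> nat \<Rightarrow> complex)
    \<Rightarrow> (nat \<Rightarrow> nat \<Rightarrow> complex)" where
  "matmul n A B = (\<lambda>i j. \<Sum>k<n. A i k * B k j)"

definition is_unitary :: "nat \<Rightarrow> (nat \<Rightarrow> nat \<Rightarrow> complex) \<Rightarrow> bool" where
  "is_unitary n A \<longleftrightarrow> (\<forall>i<n. \<forall>j<n. (\<Sum>k<n. cnj (A k i) * A k j) = kd i j)"

definition unitary_rep ::
  "('g, 'b) monoid_scheme \<Rightarrow> 'g measure \<Rightarrow> nat \<Rightarrow> ('g \<Rightarrow> nat \<Rightarrow> nat \<Rightarrow> complex) \<Rightarrow> bool" where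
  "unitary_rep G M n U \<longleftrightarrow>
     (\<forall>g\<in>carrier G. is_unitary n (U g)) \<and>
     (\<forall>g\<in>carrier G. \<forall>h\<in>carrier G. \<forall>i<n. \<forall>j<n.
         U (g \<otimes>\<^bsub>G\<^esub> h) i j = matmul n (U g) (U h) i j) \<and>
     (\<forall>i<n. \<forall>j<n. U \<one>\<^bsub>G\<^esub> i j = kd i j) \<and>
     (\<forall>i j. (\<lambda>g. U g i j) \<in> borel_measurable M)"

definition haar_prob :: "('g, 'b) monoid_scheme \<Rightarrow> 'g measure \<Rightarrow> bool" where
  "haar_prob G M \<longleftrightarrow> prob_space M \<and> space M = carrier G \<and>
     (\<forall>g\<in>carrier G. (\<lambda>h. g \<otimes>\<^bsub>G\<^esub> h) \<in> M \<rightarrow>\<^sub>M M \<and> distr M M (\<lambda>h. g \<otimes>\<^bsub>G\<^esub> h) = M) \<and>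
     (\<forall>g\<in>carrier G. (\<lambda>h. h \<otimes>\<^bsub>G\<^esub> g) \<in> M \<rightarrow>\<^sub>M M \<and> distr M M (\<lambda>h. h \<otimes>\<^bsub>G\<^esub> g) = M)"

text \<open>The basis of the tensor product of the
  site spaces over a finite set S of sites, site x having dimension d x, is the set of
  configurations c with c x < d x on S and c x = 0 off S.\<close>

definition sites :: "'v set \<Rightarrow> 'e set \<Rightarrow> ('v + 'e) set" where
  "sites V E = Inl ` V \<union> Inr ` E"

definition cfgs :: "'s set \<Rightarrow> ('s \<Rightarrow> nat) \<Rightarrow> ('s \<Rightarrow> nat) set" where
  "cfgs S d = {c. (\<forall>x\<in>S. c x < d x) \<and> (\<forall>x. x \<notin> S \<longrightarrow> c x = 0)}"

type_synonym 's op = "('s \<Rightarrow> nat) \<Rightarrow> ('s \<Rightarrow> nat) \<Rightarrow> complex"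

text \<open>Operators on H are matrices indexed by configurations, vanishing off the basis.\<close>
definition is_op :: "'s set \<Rightarrow> ('s \<Rightarrow> nat) \<Rightarrow> 's op \<Rightarrow> bool" where
  "is_op S d A \<longleftrightarrow> (\<forall>c c'. c \<notin> cfgs S d \<or> c' \<notin> cfgs S d \<longrightarrow> A c c' = 0)"

definition opmult :: "'s set \<Rightarrow> ('s \<Rightarrow> nat) \<Rightarrow> 's op \<Rightarrow> 's op \<Rightarrow> 's op" where
  "opmult S d A B = (\<lambda>c c'. \<Sum>b\<in>cfgs S d. A c b * B b c')"

definition opid :: "'s set \<Rightarrow> ('s \<Rightarrow> nat) \<Rightarrow> 's op" where
  "opid S d = (\<lambda>c c'. if c \<in> cfgs S d \<and> c = c' then 1 else 0)"

primrec oprod :: "'s set \<Rightarrow> ('s \<Rightarrow> nat) \<Rightarrow> 's op list \<Rightarrow> 's op" where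
  "oprod S d [] = opid S d"
| "oprod S d (P # Ps) = opmult S d P (oprod S d Ps)"

definition tensor :: "'s set \<Rightarrow> ('s \<Rightarrow> nat) \<Rightarrow> ('s \<Rightarrow> nat \<Rightarrow> nat \<Rightarrow> complex) \<Rightarrow> 's op" where
  "tensor S d M = (\<lambda>c c'. if c \<in> cfgs S d \<and> c' \<in> cfgs S d
                           then (\<Prod>x\<in>S. M x (c x) (c' x)) else 0)"

definition restr :: "('s \<Rightarrow> nat) \<Rightarrow> 's set \<Rightarrow> ('s \<Rightarrow> nat)" where
  "restr c r = (\<lambda>x. if x \<in> r then c x else 0)"

text \<open>The algebra A_r = B(H_r) tensor 1 on the complement of r.\<close>
definition local_alg :: "'s set \<Rightarrow> ('s \<Rightarrow> nat) \<Rightarrow> 's set \<Rightarrow> 's op set" where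
  "local_alg S d r = {A. \<exists>Ar. A = (\<lambda>c c'.
       if c \<in> cfgs S d \<and> c' \<in> cfgs S d \<and> (\<forall>x\<in>S - r. c x = c' x)
       then Ar (restr c r) (restr c' r) else 0)}"

text \<open>For an edge e: L_e(g) if e leaves v, times Rh e g = R_e(g^{-1}) if e enters v
  (both for a loop at v), identity otherwise.\<close>
definition gauge_local ::
  "('e \<Rightarrow> 'v) \<Rightarrow> ('e \<Rightarrow> 'v) \<Rightarrow> ('v + 'e \<Rightarrow> nat) \<Rightarrow>
   ('v \<Rightarrow> 'g \<Rightarrow> nat \<Rightarrow> nat \<Rightarrow> complex) \<Rightarrow> ('e \<Rightarrow> 'g \<Rightarrow> nat \<Rightarrow> nat \<Rightarrow> complex) \<Rightarrow>
   ('e \<Rightarrow> 'g \<Rightarrow> nat \<Rightarrow> nat \<Rightarrow> complex) \<Rightarrow> 'v \<Rightarrow> 'g \<Rightarrow> ('v + 'e) \<Rightarrow> nat \<Rightarrow> nat \<Rightarrow> complex" where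
  "gauge_local src tgt d U L Rh v g x =
     (case x of
        Inl w \<Rightarrow> (if w = v then U w g else kd)
      | Inr e \<Rightarrow> matmul (d x) (if src e = v then L e g else kd)
                              (if tgt e = v then Rh e g else kd))"

definition gauge_op where
  "gauge_op V E src tgt d U L Rh v g =
     tensor (sites V E) d (gauge_local src tgt d U L Rh v g)"

definition Pi_v :: "'g measure \<Rightarrow> 'v set \<Rightarrow> 'e set \<Rightarrow> ('e \<Rightarrow> 'v) \<Rightarrow> ('e \<Rightarrow> 'v) \<Rightarrow>
   ('v + 'e \<Rightarrow> nat) \<Rightarrow> ('v \<Rightarrow> 'g \<Rightarrow> nat \<Rightarrow> nat \<Rightarrow> complex) \<Rightarrow> ('e \<Rightarrow> 'g \<Rightarrow> nat \<Rightarrow> nat \<Rightarrow> complex) \<Rightarrow>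
   ('e \<Rightarrow> 'g \<Rightarrow> nat \<Rightarrow> nat \<Rightarrow> complex) \<Rightarrow> 'v \<Rightarrow> ('v + 'e) op" where
  "Pi_v M V E src tgt d U L Rh v =
     (\<lambda>c c'. LINT g|M. gauge_op V E src tgt d U L Rh v g c c')"

definition V_r :: "'v set \<Rightarrow> 'e set \<Rightarrow> ('e \<Rightarrow> 'v) \<Rightarrow> ('e \<Rightarrow> 'v) \<Rightarrow> ('v + 'e) set \<Rightarrow> 'v set" where
  "V_r V E src tgt r = {v \<in> V. Inl v \<in> r \<and> (\<forall>e\<in>E. (src e = v \<or> tgt e = v) \<longrightarrow> Inr e \<in> r)}"

end

theory Submission
  imports Defs
begin

text \<open>Write P for Pi_GI and Q for Pi_Vr. Left invariance of the Haar measure gives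
  A_v(g) Pi_v = Pi_v, and A_v(g), A_w(h) commute for v \<noteq> w, so the Pi_v are commuting idempotents
  and QP = P = PQ. For v \<in> V_r the operator A_v(g) is the identity off r, so Q lies in the algebra
  A_r. Hence for B \<in> A_r commuting with P, the compression QBQ also commutes with P and
  (QBQ)P = BP; conversely every compression QBQ is again in A_r.\<close>

lemma finite_cfgs: "finite S \<Longrightarrow> finite (cfgs S d)"
proof -
  assume fS: "finite S"
  have "cfgs S d \<subseteq> {f. \<forall>x. (x \<in> S \<longrightarrow> f x \<in> {..<Max (d ` S)}) \<and> (x \<notin> S \<longrightarrow> f x = 0)}"
    using fS by (auto simp: cfgs_def intro: less_le_trans[OF _ Max_ge])
  then show ?thesis
    using finite_set_of_finite_funs[OF fS, of "{..<Max (d ` S)}" 0] by (auto intro: finite_subset)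
qed

lemma sum_cfgs_prod:
  assumes "finite S"
  shows "(\<Sum>b\<in>cfgs S d. \<Prod>x\<in>S. f x (b x)) = (\<Prod>x\<in>S. \<Sum>k<d x. (f x k :: complex))"
proof -
  have "(\<Prod>x\<in>S. \<Sum>k<d x. f x k) = (\<Sum>g\<in>PiE S (\<lambda>x. {..<d x}). \<Prod>x\<in>S. f x (g x))"
    by (rule prod_sum_PiE) (use assms in auto)
  also have "\<dots> = (\<Sum>b\<in>cfgs S d. \<Prod>x\<in>S. f x (b x))"
    by (rule sum.reindex_bij_witness[of _ "\<lambda>b. restrict b S" "\<lambda>g x. if x \<in> S then g x else 0"])
       (auto simp: cfgs_def PiE_def extensional_def intro!: prod.cong)
  finally show ?thesis by simp
qed

lemma semigroup_opmult: "semigroup (opmult S d)"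
proof
  fix A B C
  show "opmult S d (opmult S d A B) C = opmult S d A (opmult S d B C)"
  proof (intro ext)
    fix c c'
    have "opmult S d (opmult S d A B) C c c' = (\<Sum>b\<in>cfgs S d. \<Sum>k\<in>cfgs S d. A c k * B k b * C b c')"
      by (simp add: opmult_def sum_distrib_right)
    also have "\<dots> = (\<Sum>k\<in>cfgs S d. \<Sum>b\<in>cfgs S d. A c k * B k b * C b c')"
      by (rule sum.swap)
    also have "\<dots> = opmult S d A (opmult S d B C) c c'"
      by (simp add: opmult_def sum_distrib_left mult.assoc)
    finally show "opmult S d (opmult S d A B) C c c' = opmult S d A (opmult S d B C) c c'" .
  qed
qed

lemmas opmult_assoc = semigroup.assoc[OF semigroup_opmult]

lemma is_op_opmult: "is_op S d A \<Longrightarrow> is_op S d B \<Longrightarrow> is_op S d (opmult S d A B)"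
  by (auto simp: is_op_def opmult_def)

lemma is_op_opid: "is_op S d (opid S d)"
  by (auto simp: is_op_def opid_def)

lemma opmult_opid_right: "finite S \<Longrightarrow> is_op S d A \<Longrightarrow> opmult S d A (opid S d) = A"
  unfolding opmult_def opid_def is_op_def
  by (intro ext) (auto simp: if_distrib finite_cfgs cong: if_cong)

lemma opmult_opid_left:
  assumes "finite S" "is_op S d A"
  shows "opmult S d (opid S d) A = A"
proof (intro ext)
  fix c c'
  show "opmult S d (opid S d) A c c' = A c c'"
    using assms unfolding opmult_def opid_def is_op_def
    by (cases "c \<in> cfgs S d") (auto simp: finite_cfgs if_distrib[where f="\<lambda>x. x * _"] cong: if_cong)
qed

lemma tensor_mult:
  assumes "finite S"
  shows "opmult S d (tensor S d M1) (tensor S d M2) = tensor S d (\<lambda>x. matmul (d x) (M1 x) (M2 x))"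
proof (intro ext)
  fix c c'
  show "opmult S d (tensor S d M1) (tensor S d M2) c c' = tensor S d (\<lambda>x. matmul (d x) (M1 x) (M2 x)) c c'"
  proof (cases "c \<in> cfgs S d \<and> c' \<in> cfgs S d")
    case True
    have "opmult S d (tensor S d M1) (tensor S d M2) c c' =
       (\<Sum>b\<in>cfgs S d. \<Prod>x\<in>S. M1 x (c x) (b x) * M2 x (b x) (c' x))"
      using True by (auto simp: opmult_def tensor_def prod.distrib intro!: sum.cong)
    also have "\<dots> = (\<Prod>x\<in>S. \<Sum>k<d x. M1 x (c x) k * M2 x k (c' x))"
      by (rule sum_cfgs_prod[OF assms])
    finally show ?thesis using True by (simp add: tensor_def matmul_def)
  qed (auto simp: opmult_def tensor_def)
qed

lemma is_op_oprod: "(\<And>P. P \<in> set Ps \<Longrightarrow> is_op S d P) \<Longrightarrow> is_op S d (oprod S d Ps)"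
  by (induction Ps) (auto simp: is_op_opid is_op_opmult)

lemma opmult_oprod_commute:
  assumes "finite S" "is_op S d P" "\<And>Q. Q \<in> set Qs \<Longrightarrow> opmult S d P Q = opmult S d Q P"
  shows "opmult S d P (oprod S d Qs) = opmult S d (oprod S d Qs) P"
  using assms(3)
proof (induction Qs)
  case Nil
  then show ?case by (simp add: opmult_opid_left opmult_opid_right assms(1,2))
next
  case (Cons Q Qs)
  then show ?case by (simp flip: opmult_assoc) (simp add: opmult_assoc)
qed

lemma oprod_commute:
  assumes "finite S" "\<And>P. P \<in> set Ps \<union> set Qs \<Longrightarrow> is_op S d P"
    and "\<And>P Q. P \<in> set Ps \<Longrightarrow> Q \<in> set Qs \<Longrightarrow> opmult S d P Q = opmult S d Q P"
  shows "opmult S d (oprod S d Ps) (oprod S d Qs) = opmult S d (oprod S d Qs) (oprod S d Ps)"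
  using assms(2,3)
proof (induction Ps)
  case Nil
  then show ?case by (simp add: opmult_opid_left opmult_opid_right is_op_oprod assms(1))
next
  case (Cons P Ps)
  have P: "opmult S d P (oprod S d Qs) = opmult S d (oprod S d Qs) P"
    using Cons.prems by (intro opmult_oprod_commute assms(1)) auto
  have IH: "opmult S d (oprod S d Ps) (oprod S d Qs) = opmult S d (oprod S d Qs) (oprod S d Ps)"
    using Cons.prems by (intro Cons.IH) auto
  have "opmult S d (oprod S d (P # Ps)) (oprod S d Qs)
      = opmult S d P (opmult S d (oprod S d Qs) (oprod S d Ps))"
    by (simp add: opmult_assoc IH)
  also have "\<dots> = opmult S d (oprod S d Qs) (oprod S d (P # Ps))"
    by (simp flip: opmult_assoc add: P)
  finally show ?case .
qed

lemma opmult_oprod_absorb: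
  assumes "P \<in> set Ps" "opmult S d P P = P" "\<And>Q. Q \<in> set Ps \<Longrightarrow> opmult S d P Q = opmult S d Q P"
  shows "opmult S d P (oprod S d Ps) = oprod S d Ps"
  using assms(1,3)
proof (induction Ps)
  case (Cons Q Qs)
  show ?case
  proof (cases "P = Q")
    case True
    then show ?thesis using assms(2) by (simp flip: opmult_assoc)
  next
    case False
    with Cons show ?thesis by (simp flip: opmult_assoc) (simp add: opmult_assoc)
  qed
qed simp

lemma oprod_absorb:
  assumes "finite S" "set Qs \<subseteq> set Ps" "\<And>P. P \<in> set Ps \<Longrightarrow> is_op S d P"
    and "\<And>P. P \<in> set Ps \<Longrightarrow> opmult S d P P = P"
    and "\<And>P Q. P \<in> set Ps \<Longrightarrow> Q \<in> set Ps \<Longrightarrow> opmult S d P Q = opmult S d Q P"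
  shows "opmult S d (oprod S d Qs) (oprod S d Ps) = oprod S d Ps"
  using assms(2)
proof (induction Qs)
  case Nil
  then show ?case by (simp add: opmult_opid_left is_op_oprod assms(1,3))
next
  case (Cons Q Qs)
  then show ?case by (simp add: opmult_assoc opmult_oprod_absorb assms(4,5))
qed

lemma (in semigroup) compressed_commutant_times:
  assumes QP: "Q \<^bold>* P = P" and PQ: "P \<^bold>* Q = P" and "Q \<in> A"
    and closed: "\<And>X Y. X \<in> A \<Longrightarrow> Y \<in> A \<Longrightarrow> X \<^bold>* Y \<in> A"
  shows "{B \<^bold>* P |B. B \<in> A \<and> B \<^bold>* P = P \<^bold>* B}
       = {X \<^bold>* P |X. X \<in> {Q \<^bold>* B \<^bold>* Q |B. B \<in> A} \<and> X \<^bold>* P = P \<^bold>* X}"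
proof -
  have compress: "Q \<^bold>* B \<^bold>* Q \<^bold>* P = B \<^bold>* P" "P \<^bold>* (Q \<^bold>* B \<^bold>* Q) = B \<^bold>* P"
    if "B \<^bold>* P = P \<^bold>* B" for B
  proof -
    have "Q \<^bold>* B \<^bold>* Q \<^bold>* P = Q \<^bold>* (P \<^bold>* B)" by (simp add: assoc QP that)
    also have "\<dots> = B \<^bold>* P" by (simp flip: assoc add: QP that)
    finally show "Q \<^bold>* B \<^bold>* Q \<^bold>* P = B \<^bold>* P" .
    have "P \<^bold>* (Q \<^bold>* B \<^bold>* Q) = B \<^bold>* P \<^bold>* Q" by (simp flip: assoc add: PQ that)
    also have "\<dots> = B \<^bold>* P" by (simp add: assoc PQ)
    finally show "P \<^bold>* (Q \<^bold>* B \<^bold>* Q) = B \<^bold>* P" .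
  qed
  show ?thesis
  proof (intro equalityI subsetI)
    fix Y assume "Y \<in> {B \<^bold>* P |B. B \<in> A \<and> B \<^bold>* P = P \<^bold>* B}"
    then obtain B where "Y = B \<^bold>* P" "B \<in> A" "B \<^bold>* P = P \<^bold>* B" by blast
    then show "Y \<in> {X \<^bold>* P |X. X \<in> {Q \<^bold>* B \<^bold>* Q |B. B \<in> A} \<and> X \<^bold>* P = P \<^bold>* X}"
      using compress[of B] by (intro CollectI exI[of _ "Q \<^bold>* B \<^bold>* Q"]) auto
  next
    fix Y assume "Y \<in> {X \<^bold>* P |X. X \<in> {Q \<^bold>* B \<^bold>* Q |B. B \<in> A} \<and> X \<^bold>* P = P \<^bold>* X}"
    then show "Y \<in> {B \<^bold>* P |B. B \<in> A \<and> B \<^bold>* P = P \<^bold>* B}"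
      using closed \<open>Q \<in> A\<close> by blast
  qed
qed

definition mat_eq :: "nat \<Rightarrow> (nat \<Rightarrow> nat \<Rightarrow> complex) \<Rightarrow> (nat \<Rightarrow> nat \<Rightarrow> complex) \<Rightarrow> bool" where
  "mat_eq n A B \<longleftrightarrow> (\<forall>i<n. \<forall>j<n. A i j = B i j)"

definition mat_commute :: "nat \<Rightarrow> (nat \<Rightarrow> nat \<Rightarrow> complex) \<Rightarrow> (nat \<Rightarrow> nat \<Rightarrow> complex) \<Rightarrow> bool" where
  "mat_commute n A B \<longleftrightarrow> mat_eq n (matmul n A B) (matmul n B A)"

lemma mat_eq_refl [simp]: "mat_eq n A A"
  by (simp add: mat_eq_def)

lemma mat_eq_sym: "mat_eq n A B \<Longrightarrow> mat_eq n B A"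
  by (simp add: mat_eq_def)

lemma mat_eq_trans: "mat_eq n A B \<Longrightarrow> mat_eq n B C \<Longrightarrow> mat_eq n A C"
  by (simp add: mat_eq_def)

lemma matmul_assoc: "matmul n (matmul n A B) C = matmul n A (matmul n B C)"
proof (intro ext)
  fix i j
  have "matmul n (matmul n A B) C i j = (\<Sum>l<n. \<Sum>k<n. A i k * B k l * C l j)"
    by (simp add: matmul_def sum_distrib_right)
  also have "\<dots> = (\<Sum>k<n. \<Sum>l<n. A i k * B k l * C l j)"
    by (rule sum.swap)
  also have "\<dots> = matmul n A (matmul n B C) i j"
    by (simp add: matmul_def sum_distrib_left mult.assoc)
  finally show "matmul n (matmul n A B) C i j = matmul n A (matmul n B C) i j" .
qed

lemma matmul_mat_eq_cong: "mat_eq n A A' \<Longrightarrow> mat_eq n B B' \<Longrightarrow> mat_eq n (matmul n A B) (matmul n A' B')"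
  unfolding mat_eq_def matmul_def by (auto intro!: sum.cong)

lemma matmul_kd_left: "mat_eq n (matmul n kd A) A"
  by (simp add: mat_eq_def matmul_def kd_def if_distrib[where f="\<lambda>x. x * _"] cong: if_cong)

lemma matmul_kd_right: "mat_eq n (matmul n A kd) A"
  by (simp add: mat_eq_def matmul_def kd_def if_distrib cong: if_cong)

lemma mat_commute_sym: "mat_commute n A B \<Longrightarrow> mat_commute n B A"
  by (simp add: mat_commute_def mat_eq_def)

lemma mat_commute_kd: "mat_commute n kd A"
  unfolding mat_commute_def by (rule mat_eq_trans[OF matmul_kd_left mat_eq_sym[OF matmul_kd_right]])

lemma mat_commute_matmul_right:
  assumes "mat_commute n Y A" "mat_commute n Y B"
  shows "mat_commute n Y (matmul n A B)"
proof -
  have "mat_eq n (matmul n Y (matmul n A B)) (matmul n (matmul n A Y) B)"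
    using matmul_mat_eq_cong[OF assms(1)[unfolded mat_commute_def] mat_eq_refl] by (simp add: matmul_assoc)
  moreover have "mat_eq n (matmul n (matmul n A Y) B) (matmul n A (matmul n B Y))"
    using matmul_mat_eq_cong[OF mat_eq_refl assms(2)[unfolded mat_commute_def]] by (simp add: matmul_assoc)
  ultimately show ?thesis by (auto simp: mat_commute_def matmul_assoc intro: mat_eq_trans)
qed

lemma mat_commute_matmul_left:
  "mat_commute n A Y \<Longrightarrow> mat_commute n B Y \<Longrightarrow> mat_commute n (matmul n A B) Y"
  by (blast intro: mat_commute_sym mat_commute_matmul_right)

lemma matmul_interchange:
  assumes "mat_commute n B A'"
  shows "mat_eq n (matmul n (matmul n A B) (matmul n A' B')) (matmul n (matmul n A A') (matmul n B B'))"
proof -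
  have "mat_eq n (matmul n (matmul n B A') B') (matmul n (matmul n A' B) B')"
    by (rule matmul_mat_eq_cong[OF assms[unfolded mat_commute_def] mat_eq_refl])
  then have "mat_eq n (matmul n A (matmul n (matmul n B A') B')) (matmul n A (matmul n (matmul n A' B) B'))"
    by (rule matmul_mat_eq_cong[OF mat_eq_refl])
  then show ?thesis by (simp add: matmul_assoc)
qed

lemma tensor_cong:
  assumes "\<And>x. x \<in> S \<Longrightarrow> mat_eq (d x) (M1 x) (M2 x)"
  shows "tensor S d M1 = tensor S d M2"
  using assms by (auto simp: tensor_def cfgs_def mat_eq_def intro!: ext prod.cong)

lemma unitary_rep_mult:
  "unitary_rep G M n U \<Longrightarrow> g \<in> carrier G \<Longrightarrow> h \<in> carrier G \<Longrightarrow>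
   mat_eq n (matmul n (U g) (U h)) (U (g \<otimes>\<^bsub>G\<^esub> h))"
  by (auto simp: unitary_rep_def mat_eq_def)

lemma unitary_entry_bound:
  assumes "is_unitary n A" "i < n" "j < n"
  shows "norm (A i j) \<le> 1"
proof -
  have "cnj (A k j) * A k j = of_real ((norm (A k j))\<^sup>2)" for k
    using complex_norm_square[of "A k j"] by (simp add: mult.commute)
  moreover have "(\<Sum>k<n. cnj (A k j) * A k j) = 1"
    using assms(1,3) by (simp add: is_unitary_def kd_def)
  ultimately have "of_real (\<Sum>k<n. (norm (A k j))\<^sup>2) = (1::complex)"
    by simp
  then have "(\<Sum>k<n. (norm (A k j))\<^sup>2) = 1"
    using of_real_eq_1_iff by blast
  moreover have "(norm (A i j))\<^sup>2 \<le> (\<Sum>k<n. (norm (A k j))\<^sup>2)"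
    by (rule member_le_sum) (use assms(2) in auto)
  ultimately show ?thesis
    using power2_le_imp_le[of "norm (A i j)" 1] by simp
qed

lemma unitary_rep_entry_bound:
  "unitary_rep G M n U \<Longrightarrow> g \<in> carrier G \<Longrightarrow> i < n \<Longrightarrow> j < n \<Longrightarrow> norm (U g i j) \<le> 1"
  unfolding unitary_rep_def using unitary_entry_bound by blast

lemma matmul_entry_bound:
  assumes "\<And>k. k < n \<Longrightarrow> norm (A i k) \<le> 1" "\<And>k. k < n \<Longrightarrow> norm (B k j) \<le> 1"
  shows "norm (matmul n A B i j) \<le> n"
proof -
  have "norm (matmul n A B i j) \<le> (\<Sum>k<n. norm (A i k * B k j))"
    unfolding matmul_def by (rule norm_sum)
  also have "\<dots> \<le> (\<Sum>k<n. 1)"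
    by (rule sum_mono) (use assms in \<open>auto simp: norm_mult intro: mult_le_one\<close>)
  finally show ?thesis by simp
qed

definition ampliation :: "'s set \<Rightarrow> ('s \<Rightarrow> nat) \<Rightarrow> 's set \<Rightarrow> 's op \<Rightarrow> 's op" where
  "ampliation S d r A = (\<lambda>c c'.
     if c \<in> cfgs S d \<and> c' \<in> cfgs S d \<and> (\<forall>x\<in>S - r. c x = c' x)
     then A (restr c r) (restr c' r) else 0)"

lemma local_alg_eq_range_ampliation: "local_alg S d r = range (ampliation S d r)"
  by (auto simp: local_alg_def ampliation_def)

lemma sum_cfgs_agreeing:
  assumes c: "c \<in> cfgs S d"
  shows "(\<Sum>b | b \<in> cfgs S d \<and> (\<forall>x\<in>S - r. c x = b x). f (restr b r)) = (\<Sum>a\<in>cfgs (S \<inter> r) d. f a)"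
  by (rule sum.reindex_bij_witness[of _ "\<lambda>a x. if x \<in> r then a x else c x" "\<lambda>b. restr b r"])
     (use c in \<open>auto simp: cfgs_def restr_def fun_eq_iff, metis Diff_iff\<close>)

lemma opmult_ampliation:
  assumes "finite S"
  shows "opmult S d (ampliation S d r A) (ampliation S d r B) =
   ampliation S d r (\<lambda>a a'. \<Sum>a''\<in>cfgs (S \<inter> r) d. A a a'' * B a'' a')"
proof (intro ext)
  fix c c'
  let ?agree = "\<lambda>c b. \<forall>x\<in>S - r. c x = b x"
  show "opmult S d (ampliation S d r A) (ampliation S d r B) c c' =
        ampliation S d r (\<lambda>a a'. \<Sum>a''\<in>cfgs (S \<inter> r) d. A a a'' * B a'' a') c c'"
  proof (cases "c \<in> cfgs S d \<and> c' \<in> cfgs S d \<and> ?agree c c'")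
    case True
    then have "opmult S d (ampliation S d r A) (ampliation S d r B) c c' =
        (\<Sum>b | b \<in> cfgs S d \<and> ?agree c b. A (restr c r) (restr b r) * B (restr b r) (restr c' r))"
      unfolding opmult_def ampliation_def
      using assms by (intro sum.mono_neutral_cong_right) (auto simp: finite_cfgs)
    also have "\<dots> = (\<Sum>a''\<in>cfgs (S \<inter> r) d. A (restr c r) a'' * B a'' (restr c' r))"
      using True by (intro sum_cfgs_agreeing) auto
    finally show ?thesis using True by (simp add: ampliation_def)
  next
    case False
    then show ?thesis by (auto simp: opmult_def ampliation_def intro!: sum.neutral)
  qed
qed

lemma opid_eq_ampliation: "opid S d = ampliation S d r (\<lambda>a a'. if a = a' then 1 else 0)"
proof (intro ext)
  fix c c'
  have "c = c' \<longleftrightarrow> restr c r = restr c' r"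
    if "c \<in> cfgs S d" "c' \<in> cfgs S d" "\<forall>x\<in>S - r. c x = c' x"
    using that by (auto simp: restr_def cfgs_def fun_eq_iff) (metis Diff_iff)
  then show "opid S d c c' = ampliation S d r (\<lambda>a a'. if a = a' then 1 else 0) c c'"
    by (auto simp: opid_def ampliation_def)
qed

lemma tensor_eq_ampliation:
  assumes fin: "finite S" and id_outside: "\<And>x. x \<in> S - r \<Longrightarrow> mat_eq (d x) (M x) kd"
  shows "tensor S d M = ampliation S d r (\<lambda>a a'. \<Prod>x\<in>S \<inter> r. M x (a x) (a' x))"
proof (intro ext)
  fix c c'
  show "tensor S d M c c' = ampliation S d r (\<lambda>a a'. \<Prod>x\<in>S \<inter> r. M x (a x) (a' x)) c c'"
  proof (cases "c \<in> cfgs S d \<and> c' \<in> cfgs S d")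
    case True
    then have kd_outside: "M x (c x) (c' x) = kd (c x) (c' x)" if "x \<in> S - r" for x
      using id_outside[OF that] that by (auto simp: mat_eq_def cfgs_def)
    have outside: "(\<Prod>x\<in>S - r. M x (c x) (c' x)) = (if \<forall>x\<in>S - r. c x = c' x then 1 else 0)"
      using fin by (auto simp: kd_outside kd_def intro: prod_zero)
    have inside: "(\<Prod>x\<in>S \<inter> r. M x (c x) (c' x)) = (\<Prod>x\<in>S \<inter> r. M x (restr c r x) (restr c' r x))"
      by (simp add: restr_def)
    have "(\<Prod>x\<in>S. M x (c x) (c' x)) = (\<Prod>x\<in>S \<inter> r. M x (c x) (c' x)) * (\<Prod>x\<in>S - r. M x (c x) (c' x))"
      by (rule prod.Int_Diff[OF fin])
    then show ?thesis
      using True by (simp add: tensor_def ampliation_def outside inside)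
  qed (auto simp: tensor_def ampliation_def)
qed

lemma integral_if_zero:
  "(LINT x|M. (if P then f x else 0)) = (if P then (LINT x|M. f x) else (0::'a::{banach, second_countable_topology}))"
  by simp

lemma integral_in_local_alg:
  assumes "\<And>g. g \<in> space M \<Longrightarrow> F g \<in> local_alg S d r"
  shows "(\<lambda>c c'. LINT g|M. F g c c') \<in> local_alg S d r"
proof -
  have "\<forall>g\<in>space M. \<exists>A. F g = ampliation S d r A"
    using assms by (auto simp: local_alg_eq_range_ampliation)
  then obtain A where A: "\<And>g. g \<in> space M \<Longrightarrow> F g = ampliation S d r (A g)"
    by metis
  have "(\<lambda>c c'. LINT g|M. F g c c') = ampliation S d r (\<lambda>a a'. LINT g|M. A g a a')"
  proof (intro ext)
    fix c c'
    have "(LINT g|M. F g c c') = (LINT g|M. ampliation S d r (A g) c c')"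
      by (rule Bochner_Integration.integral_cong) (simp_all add: A)
    also have "\<dots> = ampliation S d r (\<lambda>a a'. LINT g|M. A g a a') c c'"
      unfolding ampliation_def by (rule integral_if_zero)
    finally show "(LINT g|M. F g c c') = ampliation S d r (\<lambda>a a'. LINT g|M. A g a a') c c'" .
  qed
  then show ?thesis unfolding local_alg_eq_range_ampliation by blast
qed

lemma opmult_in_local_alg:
  "finite S \<Longrightarrow> A \<in> local_alg S d r \<Longrightarrow> B \<in> local_alg S d r \<Longrightarrow> opmult S d A B \<in> local_alg S d r"
  unfolding local_alg_eq_range_ampliation by (auto simp: opmult_ampliation)

lemma opid_in_local_alg: "opid S d \<in> local_alg S d r"
  unfolding local_alg_eq_range_ampliation opid_eq_ampliation[of S d r] by blast

lemma oprod_in_local_alg: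
  "finite S \<Longrightarrow> (\<And>P. P \<in> set Ps \<Longrightarrow> P \<in> local_alg S d r) \<Longrightarrow> oprod S d Ps \<in> local_alg S d r"
  by (induction Ps) (auto simp: opid_in_local_alg opmult_in_local_alg)

lemma opmult_integral_left:
  assumes "\<And>b c'. integrable M (\<lambda>g. F g b c')"
  shows "opmult S d X (\<lambda>c c'. LINT g|M. F g c c') = (\<lambda>c c'. LINT g|M. opmult S d X (F g) c c')"
  unfolding opmult_def using assms by (subst Bochner_Integration.integral_sum) auto

lemma opmult_integral_right:
  assumes "\<And>b c'. integrable M (\<lambda>g. F g b c')"
  shows "opmult S d (\<lambda>c c'. LINT g|M. F g c c') X = (\<lambda>c c'. LINT g|M. opmult S d (F g) X c c')"
  unfolding opmult_def using assms by (subst Bochner_Integration.integral_sum) auto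

lemma haar_integral_left_mult:
  fixes f :: "'g \<Rightarrow> complex"
  assumes "haar_prob G M" "g \<in> carrier G" "f \<in> borel_measurable M"
  shows "(LINT h|M. f (g \<otimes>\<^bsub>G\<^esub> h)) = (LINT h|M. f h)"
  using assms integral_distr[of "\<lambda>h. g \<otimes>\<^bsub>G\<^esub> h" M M f] by (simp add: haar_prob_def)

locale gauge_graph =
  fixes G :: "('g, 'b) monoid_scheme" and M :: "'g measure"
    and V :: "'v set" and E :: "'e set" and src tgt :: "'e \<Rightarrow> 'v"
    and d :: "'v + 'e \<Rightarrow> nat"
    and U :: "'v \<Rightarrow> 'g \<Rightarrow> nat \<Rightarrow> nat \<Rightarrow> complex"
    and L Rh :: "'e \<Rightarrow> 'g \<Rightarrow> nat \<Rightarrow> nat \<Rightarrow> complex"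
  assumes haar: "haar_prob G M"
    and finite_V: "finite V" and finite_E: "finite E"
    and rep_U: "\<And>v. v \<in> V \<Longrightarrow> unitary_rep G M (d (Inl v)) (U v)"
    and rep_L: "\<And>e. e \<in> E \<Longrightarrow> unitary_rep G M (d (Inr e)) (L e)"
    and rep_R: "\<And>e. e \<in> E \<Longrightarrow> unitary_rep G M (d (Inr e)) (Rh e)"
    and L_R_commute: "\<And>e g h. e \<in> E \<Longrightarrow> g \<in> carrier G \<Longrightarrow> h \<in> carrier G \<Longrightarrow>
                        mat_commute (d (Inr e)) (L e g) (Rh e h)"
begin

abbreviation "S \<equiv> sites V E"
abbreviation "factor \<equiv> gauge_local src tgt d U L Rh"
abbreviation "Av \<equiv> gauge_op V E src tgt d U L Rh"
abbreviation "Pv \<equiv> Pi_v M V E src tgt d U L Rh"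

sublocale prob_space M
  using haar by (simp add: haar_prob_def)

lemma space_M: "space M = carrier G"
  using haar by (simp add: haar_prob_def)

lemma finite_sites: "finite S"
  using finite_V finite_E by (simp add: sites_def)

lemma factor_edge:
  "factor v g (Inr e) = matmul (d (Inr e)) (if src e = v then L e g else kd) (if tgt e = v then Rh e g else kd)"
  by (simp add: gauge_local_def)

lemma factor_mult:
  assumes v: "v \<in> V" and g: "g \<in> carrier G" and h: "h \<in> carrier G" and x: "x \<in> S"
  shows "mat_eq (d x) (matmul (d x) (factor v g x) (factor v h x)) (factor v (g \<otimes>\<^bsub>G\<^esub> h) x)"
proof (cases x)
  case (Inl w)
  then show ?thesis
    using unitary_rep_mult[OF rep_U[OF v] g h] matmul_kd_left[of "d x" kd]
    by (cases "w = v") (simp_all add: gauge_local_def)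
next
  case (Inr e)
  then have e: "e \<in> E" using x by (simp add: sites_def image_iff)
  let ?n = "d (Inr e)"
  define a where "a = (\<lambda>g. if src e = v then L e g else kd)"
  define b where "b = (\<lambda>g. if tgt e = v then Rh e g else kd)"
  have "mat_commute ?n (b g) (a h)"
    using L_R_commute[OF e h g] by (auto simp: a_def b_def mat_commute_kd intro: mat_commute_sym)
  moreover have "mat_eq ?n (matmul ?n (a g) (a h)) (a (g \<otimes>\<^bsub>G\<^esub> h))"
    using unitary_rep_mult[OF rep_L[OF e] g h] matmul_kd_left[of ?n kd] by (simp add: a_def)
  moreover have "mat_eq ?n (matmul ?n (b g) (b h)) (b (g \<otimes>\<^bsub>G\<^esub> h))"
    using unitary_rep_mult[OF rep_R[OF e] g h] matmul_kd_left[of ?n kd] by (simp add: b_def)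
  moreover have "factor v k x = matmul ?n (a k) (b k)" for k
    using Inr by (simp add: factor_edge a_def b_def)
  ultimately show ?thesis
    using Inr by (simp add: mat_eq_trans[OF matmul_interchange matmul_mat_eq_cong])
qed

lemma factor_commute:
  assumes vw: "v \<noteq> w" and g: "g \<in> carrier G" and h: "h \<in> carrier G" and x: "x \<in> S"
  shows "mat_commute (d x) (factor v g x) (factor w h x)"
proof (cases x)
  case (Inl u)
  then show ?thesis
    using vw by (auto simp: gauge_local_def mat_commute_kd intro: mat_commute_sym)
next
  case (Inr e)
  then have e: "e \<in> E" using x by (simp add: sites_def image_iff)
  let ?n = "d (Inr e)"
  define a where "a = (\<lambda>v g. if src e = v then L e g else kd)"
  define b where "b = (\<lambda>v g. if tgt e = v then Rh e g else kd)"
  have "mat_commute ?n (a v g) (a w h)" "mat_commute ?n (b v g) (b w h)"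
    using vw by (auto simp: a_def b_def mat_commute_kd intro: mat_commute_sym)
  moreover have "mat_commute ?n (a v g) (b w h)" "mat_commute ?n (b v g) (a w h)"
    using L_R_commute[OF e g h] L_R_commute[OF e h g]
    by (auto simp: a_def b_def mat_commute_kd intro: mat_commute_sym)
  moreover have "factor u k x = matmul ?n (a u k) (b u k)" for u k
    using Inr by (simp add: factor_edge a_def b_def)
  ultimately show ?thesis
    using Inr by (simp add: mat_commute_matmul_left mat_commute_matmul_right)
qed

lemma gauge_mult:
  "v \<in> V \<Longrightarrow> g \<in> carrier G \<Longrightarrow> h \<in> carrier G \<Longrightarrow>
   opmult S d (Av v g) (Av v h) = Av v (g \<otimes>\<^bsub>G\<^esub> h)"
  unfolding gauge_op_def tensor_mult[OF finite_sites] by (intro tensor_cong factor_mult)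

lemma gauge_commute:
  "v \<noteq> w \<Longrightarrow> g \<in> carrier G \<Longrightarrow> h \<in> carrier G \<Longrightarrow>
   opmult S d (Av v g) (Av w h) = opmult S d (Av w h) (Av v g)"
  unfolding gauge_op_def tensor_mult[OF finite_sites]
  by (intro tensor_cong) (use factor_commute in \<open>auto simp: mat_commute_def\<close>)

lemma factor_entry_bound:
  assumes v: "v \<in> V" and g: "g \<in> carrier G" and x: "x \<in> S" and "i < d x" "j < d x"
  shows "norm (factor v g x i j) \<le> real (d x) + 1"
proof (cases x)
  case (Inl w)
  then have "norm (factor v g x i j) \<le> 1"
    using unitary_rep_entry_bound[OF rep_U[OF v] g] assms(4,5)
    by (cases "w = v") (auto simp: gauge_local_def kd_def)
  then show ?thesis by simp
next
  case (Inr e)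
  then have e: "e \<in> E" using x by (simp add: sites_def image_iff)
  have "norm (factor v g x i j) \<le> d x"
    unfolding Inr factor_edge
    by (rule matmul_entry_bound)
       (use assms(4,5) Inr unitary_rep_entry_bound[OF rep_L[OF e] g] unitary_rep_entry_bound[OF rep_R[OF e] g]
        in \<open>auto simp: kd_def\<close>)
  then show ?thesis by simp
qed

lemma factor_measurable:
  assumes v: "v \<in> V" and x: "x \<in> S"
  shows "(\<lambda>g. factor v g x i j) \<in> borel_measurable M"
proof (cases x)
  case (Inl w)
  then show ?thesis
    using rep_U[OF v] by (cases "w = v") (auto simp: gauge_local_def unitary_rep_def)
next
  case (Inr e)
  then have e: "e \<in> E" using x by (simp add: sites_def image_iff)
  have "(\<lambda>g. L e g a b) \<in> borel_measurable M" "(\<lambda>g. Rh e g a b) \<in> borel_measurable M" for a b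
    using rep_L[OF e] rep_R[OF e] by (auto simp: unitary_rep_def)
  then show ?thesis
    unfolding Inr factor_edge matmul_def by (cases "src e = v"; cases "tgt e = v") auto
qed

lemma gauge_entry_measurable: "v \<in> V \<Longrightarrow> (\<lambda>g. Av v g c c') \<in> borel_measurable M"
  unfolding gauge_op_def tensor_def
  by (cases "c \<in> cfgs S d \<and> c' \<in> cfgs S d") (auto intro!: borel_measurable_prod factor_measurable)

lemma gauge_entry_integrable:
  assumes v: "v \<in> V"
  shows "integrable M (\<lambda>g. Av v g c c')"
proof -
  have "norm (Av v g c c') \<le> (\<Prod>x\<in>S. real (d x) + 1)" if "g \<in> space M" for g
  proof -
    have g: "g \<in> carrier G"
      using that by (simp add: space_M)
    have "norm (\<Prod>x\<in>S. factor v g x (c x) (c' x)) \<le> (\<Prod>x\<in>S. real (d x) + 1)"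
      if "c \<in> cfgs S d" "c' \<in> cfgs S d"
      unfolding prod_norm[symmetric]
      by (rule prod_mono) (use that factor_entry_bound[OF v g] in \<open>auto simp: cfgs_def\<close>)
    then show ?thesis
      by (auto simp: gauge_op_def tensor_def prod_nonneg)
  qed
  then show ?thesis
    by (intro integrable_const_bound AE_I2 gauge_entry_measurable[OF v])
qed

lemma Pv_eq_integral: "Pv v = (\<lambda>c c'. LINT g|M. Av v g c c')"
  by (simp add: Pi_v_def)

lemma gauge_mult_Pv:
  assumes v: "v \<in> V" and g: "g \<in> carrier G"
  shows "opmult S d (Av v g) (Pv v) = Pv v"
proof (intro ext)
  fix c c'
  have "opmult S d (Av v g) (Pv v) c c' = (LINT h|M. opmult S d (Av v g) (Av v h) c c')"
    unfolding Pv_eq_integral opmult_integral_left[OF gauge_entry_integrable[OF v]] ..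
  also have "\<dots> = (LINT h|M. Av v (g \<otimes>\<^bsub>G\<^esub> h) c c')"
    by (intro Bochner_Integration.integral_cong) (auto simp: gauge_mult[OF v g] space_M)
  also have "\<dots> = Pv v c c'"
    unfolding Pv_eq_integral by (rule haar_integral_left_mult[OF haar g gauge_entry_measurable[OF v]])
  finally show "opmult S d (Av v g) (Pv v) c c' = Pv v c c'" .
qed

lemma Pv_idem:
  assumes v: "v \<in> V"
  shows "opmult S d (Pv v) (Pv v) = Pv v"
proof (intro ext)
  fix c c'
  have "opmult S d (Pv v) (Pv v) c c' = (LINT g|M. opmult S d (Av v g) (Pv v) c c')"
    unfolding Pv_eq_integral[of v] opmult_integral_right[OF gauge_entry_integrable[OF v]]
    by (simp add: Pv_eq_integral)
  also have "\<dots> = (LINT g|M. Pv v c c')"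
    by (intro Bochner_Integration.integral_cong) (auto simp: gauge_mult_Pv[OF v] space_M)
  also have "\<dots> = Pv v c c'"
    by (simp add: prob_space)
  finally show "opmult S d (Pv v) (Pv v) c c' = Pv v c c'" .
qed

lemma gauge_Pv_commute:
  assumes "v \<noteq> w" "w \<in> V" "g \<in> carrier G"
  shows "opmult S d (Av v g) (Pv w) = opmult S d (Pv w) (Av v g)"
proof -
  have "opmult S d (Av v g) (Pv w) = (\<lambda>c c'. LINT h|M. opmult S d (Av v g) (Av w h) c c')"
    unfolding Pv_eq_integral opmult_integral_left[OF gauge_entry_integrable[OF assms(2)]] ..
  also have "\<dots> = (\<lambda>c c'. LINT h|M. opmult S d (Av w h) (Av v g) c c')"
    using assms by (intro ext Bochner_Integration.integral_cong) (auto simp: gauge_commute space_M)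
  also have "\<dots> = opmult S d (Pv w) (Av v g)"
    unfolding Pv_eq_integral opmult_integral_right[OF gauge_entry_integrable[OF assms(2)]] ..
  finally show ?thesis .
qed

lemma Pv_commute:
  assumes v: "v \<in> V" and w: "w \<in> V"
  shows "opmult S d (Pv v) (Pv w) = opmult S d (Pv w) (Pv v)"
proof (cases "v = w")
  case False
  have "opmult S d (Pv v) (Pv w) = (\<lambda>c c'. LINT g|M. opmult S d (Av v g) (Pv w) c c')"
    unfolding Pv_eq_integral[of v] opmult_integral_right[OF gauge_entry_integrable[OF v]] ..
  also have "\<dots> = (\<lambda>c c'. LINT g|M. opmult S d (Pv w) (Av v g) c c')"
    using False w by (intro ext Bochner_Integration.integral_cong) (auto simp: gauge_Pv_commute space_M)
  also have "\<dots> = opmult S d (Pv w) (Pv v)"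
    unfolding Pv_eq_integral[of v] opmult_integral_left[OF gauge_entry_integrable[OF v]] ..
  finally show ?thesis .
qed simp

lemma is_op_Pv: "is_op S d (Pv v)"
  unfolding Pv_eq_integral is_op_def gauge_op_def tensor_def by auto

lemma Pv_in_local_alg:
  assumes v: "v \<in> V_r V E src tgt r"
  shows "Pv v \<in> local_alg S d r"
  unfolding Pv_eq_integral
proof (rule integral_in_local_alg)
  fix g
  have "mat_eq (d x) (factor v g x) kd" if x: "x \<in> S - r" for x
  proof (cases x)
    case (Inl w)
    then show ?thesis using v x by (auto simp: V_r_def gauge_local_def)
  next
    case (Inr e)
    then have "src e \<noteq> v" "tgt e \<noteq> v"
      using v x by (auto simp: V_r_def sites_def)
    then show ?thesis using Inr matmul_kd_left[of "d x" kd] by (simp add: gauge_local_def)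
  qed
  then show "Av v g \<in> local_alg S d r"
    unfolding gauge_op_def local_alg_eq_range_ampliation
    using tensor_eq_ampliation[OF finite_sites, where r=r and M="factor v g"] by blast
qed

end

theorem lemma3:
  fixes G :: "('g, 'b) monoid_scheme" and M :: "'g measure"
    and V :: "'v set" and E :: "'e set" and src tgt :: "'e \<Rightarrow> 'v"
    and d :: "'v + 'e \<Rightarrow> nat"
    and U :: "'v \<Rightarrow> 'g \<Rightarrow> nat \<Rightarrow> nat \<Rightarrow> complex"
    and L Rh :: "'e \<Rightarrow> 'g \<Rightarrow> nat \<Rightarrow> nat \<Rightarrow> complex"
    and vs :: "'v list" and r :: "('v + 'e) set"
  assumes grp: "group G"
    and haar: "haar_prob G M"
    and finV: "finite V" and finE: "finite E"
    and edges: "\<forall>e\<in>E. src e \<in> V \<and> tgt e \<in> V"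
    and repU: "\<forall>v\<in>V. unitary_rep G M (d (Inl v)) (U v)"
    and repL: "\<forall>e\<in>E. unitary_rep G M (d (Inr e)) (L e)"
    and repR: "\<forall>e\<in>E. unitary_rep G M (d (Inr e)) (Rh e)"
    and LR_comm: "\<forall>e\<in>E. \<forall>g\<in>carrier G. \<forall>h\<in>carrier G. \<forall>i<d (Inr e). \<forall>j<d (Inr e).
                    matmul (d (Inr e)) (L e g) (Rh e h) i j = matmul (d (Inr e)) (Rh e h) (L e g) i j"
    and vs: "distinct vs" "set vs = V"
    and r: "r \<subseteq> sites V E"
  shows
   "(let S = sites V E;
         Pi = Pi_v M V E src tgt d U L Rh;
         PiGI = oprod S d (map Pi vs);
         PiVr = oprod S d (map Pi (filter (\<lambda>v. v \<in> V_r V E src tgt r) vs));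
         Ar = local_alg S d r;
         Ahat = {opmult S d (opmult S d PiVr B) PiVr | B. B \<in> Ar}
     in {opmult S d B PiGI | B. B \<in> Ar \<and> opmult S d B PiGI = opmult S d PiGI B}
      = {opmult S d X PiGI | X. X \<in> Ahat \<and> opmult S d X PiGI = opmult S d PiGI X})"
proof -
  interpret gauge_graph G M V E src tgt d U L Rh
    using haar finV finE repU repL repR LR_comm by unfold_locales (auto simp: mat_commute_def mat_eq_def)
  let ?P = "oprod S d (map Pv vs)"
  let ?Q = "oprod S d (map Pv (filter (\<lambda>v. v \<in> V_r V E src tgt r) vs))"
  have vs_V: "\<And>v. v \<in> set vs \<Longrightarrow> v \<in> V"
    using vs(2) by simp
  have QP: "opmult S d ?Q ?P = ?P"
    by (intro oprod_absorb finite_sites) (auto simp: is_op_Pv Pv_idem Pv_commute vs_V)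
  have "opmult S d ?P ?Q = opmult S d ?Q ?P"
    by (rule oprod_commute[OF finite_sites]) (auto simp: is_op_Pv Pv_commute vs_V)
  with QP have PQ: "opmult S d ?P ?Q = ?P"
    by simp
  have Q_local: "?Q \<in> local_alg S d r"
    by (intro oprod_in_local_alg finite_sites) (auto simp: Pv_in_local_alg)
  show ?thesis
    unfolding Let_def
    by (rule semigroup.compressed_commutant_times[OF semigroup_opmult QP PQ Q_local
          opmult_in_local_alg[OF finite_sites]])
qed

end
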